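(* Let $|\Psi\rangle$ be any pure single-qubit non-stabilizer state whose density matrix lies in the set $P_Y$. Then any $\omega$-witness $|\omega\rangle$ achieving $|\langle\Psi|\omega\rangle|^2=\xi(\Psi)$ satisfies $$|\omega\rangle\langle\omega|=\frac{I+qH+\sqrt{1-q^2}\,Y}{1+q/\sqrt2},\qquad H=(X+Z)/\sqrt2,$$ for some $q$ with $\sqrt{2/3}\le q\le1$. Furthermore, if $|\Psi\rangle\langle\Psi|$ is in $P_Y\cap P_X$ or in $P_Y\cap P_Z$, then $q=\sqrt{2/3}$, i.e. $$|\omega\rangle\langle\omega|=\frac{I+(X+Y+Z)/\sqrt3}{1+1/\sqrt3}.$$
   Context: $X,Y,Z$ are the Pauli matrices; the single-qubit pure stabilizer states are $|0\rangle,|1\rangle,|\pm\rangle,|\pm_i\rangle$. An $\omega$-witness is a vector $|\omega\rangle\in\mathbb C^2$ with $|\langle\omega|\phi\rangle|\le1$ for all pure single-qubit stabilizer states $|\phi\rangle$; $\xi(\Psi)=\min\{\|c\|_1^2:|\Psi\rangle=\sum_jc_j|\phi_j\rangle,\ |\phi_j\rangle\text{ stabilizer}\}$. Writing $\langle M\rangle=\mathrm{Tr}[\rho M]$: the positive octant is $P=\{\rho:\langle X\rangle,\langle Y\rangle,\langle Z\rangle\ge0\}$, and $P_X=\{\rho\in P:\langle X\rangle\le\langle Y\rangle,\ \langle X\rangle\le\langle Z\rangle\}$, $P_Y=\{\rho\in P:\langle Y\rangle\le\langle X\rangle,\ \langle Y\rangle\le\langle Z\rangle\}$, $P_Z=\{\rho\in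 P:\langle Z\rangle\le\langle X\rangle,\ \langle Z\rangle\le\langle Y\rangle\}$. *)

theory Defs
  imports "HOL-Analysis.Analysis"
begin

type_synonym qvec = "complex ^ 2"
type_synonym qmat = "complex ^ 2 ^ 2"

definition mat2 :: "complex \<Rightarrow> complex \<Rightarrow> complex \<Rightarrow> complex \<Rightarrow> qmat" where
  "mat2 a b c d = vector [vector [a, b], vector [c, d]]"

definition ket :: "complex \<Rightarrow> complex \<Rightarrow> qvec" where
  "ket a b = vector [a, b]"

definition PauliI :: qmat where "PauliI = mat2 1 0 0 1"
definition PauliX :: qmat where "PauliX = mat2 0 1 1 0"
definition PauliY :: qmat where "PauliY = mat2 0 (-\<i>) \<i> 0"
definition PauliZ :: qmat where "PauliZ = mat2 1 0 0 (-1)"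

definition braket :: "qvec \<Rightarrow> qvec \<Rightarrow> complex" where
  "braket a b = (\<Sum>i\<in>UNIV. cnj (a $ i) * b $ i)"

definition outer :: "qvec \<Rightarrow> qvec \<Rightarrow> qmat" where
  "outer a b = (\<chi> i j. a $ i * cnj (b $ j))"

definition stab_reps :: "qvec set" where
  "stab_reps = {ket 1 0, ket 0 1,
                ket (1 / sqrt 2) (1 / sqrt 2), ket (1 / sqrt 2) (- 1 / sqrt 2),
                ket (1 / sqrt 2) (\<i> / sqrt 2), ket (1 / sqrt 2) (- \<i> / sqrt 2)}"

definition stab_states :: "qvec set" where
  "stab_states = {c *s s | c s. cmod c = 1 \<and> s \<in> stab_reps}"

definition omega_witness :: "qvec \<Rightarrow> bool" where
  "omega_witness w \<longleftrightarrow> (\<forall>\<phi>\<in>stab_states. cmod (braket w \<phi>) \<le> 1)"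

definition xi :: "qvec \<Rightarrow> real" where
  "xi \<Psi> = Inf {(\<Sum>j<n. cmod (c j))\<^sup>2 | (n::nat) (c::nat \<Rightarrow> complex) (\<phi>::nat \<Rightarrow> qvec).
                 (\<forall>j<n. \<phi> j \<in> stab_states) \<and> \<Psi> = (\<Sum>j<n. c j *s \<phi> j)}"

text \<open>Expectation value <M> = Tr[rho M] (real part; real for Hermitian rho, M).\<close>
definition expect :: "qmat \<Rightarrow> qmat \<Rightarrow> real" where
  "expect \<rho> M = Re (trace (\<rho> ** M))"

definition in_P :: "qmat \<Rightarrow> bool" where
  "in_P \<rho> \<longleftrightarrow> expect \<rho> PauliX \<ge> 0 \<and> expect \<rho> PauliY \<ge> 0 \<and> expect \<rho> PauliZ \<ge> 0"

definition in_PX :: "qmat \<Rightarrow> bool" where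
  "in_PX \<rho> \<longleftrightarrow> in_P \<rho> \<and> expect \<rho> PauliX \<le> expect \<rho> PauliY \<and> expect \<rho> PauliX \<le> expect \<rho> PauliZ"
definition in_PY :: "qmat \<Rightarrow> bool" where
  "in_PY \<rho> \<longleftrightarrow> in_P \<rho> \<and> expect \<rho> PauliY \<le> expect \<rho> PauliX \<and> expect \<rho> PauliY \<le> expect \<rho> PauliZ"
definition in_PZ :: "qmat \<Rightarrow> bool" where
  "in_PZ \<rho> \<longleftrightarrow> in_P \<rho> \<and> expect \<rho> PauliZ \<le> expect \<rho> PauliX \<and> expect \<rho> PauliZ \<le> expect \<rho> PauliY"

end

theory Submission
  imports Defs
begin

(* In Bloch coordinates the squared overlap is linear: if \<Psi> has Bloch vector p and \<omega> has
   unnormalised Bloch coordinates (n, s), then 2 |<\<Psi>|\<omega>>|^2 = n + s . p, and \<omega> is a witness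
   iff |s| = n and n + |s_i| \<le> 2 for i = x, y, z.  Every witness bounds the extent from below
   and every such (n, s) comes from some vector, so an optimal witness maximises n + s . p over
   this set.  For p in P_Y there are two regimes, separated by <X> + <Z> - 1 = (2 + sqrt 3) <Y>:
   in the first the maximiser is the symmetric witness along X + Y + Z, in the second it lies in
   the plane spanned by H and Y, and the second regime is impossible when <Y> equals <X> or <Z>.
   In each regime the maximiser is pinned down by a Lagrange-multiplier certificate: the gap to
   the optimum is a nonnegative combination of the slacks of the faces n + s_i \<le> 2 and of a
   Cauchy-Schwarz inequality s . w \<le> n |w|. *)

lemma ket_nth [simp]: "ket a b $ 1 = a" "ket a b $ 2 = b"
  by (simp_all add: ket_def)

lemma braket_eq: "braket a b = cnj (a$1) * b$1 + cnj (a$2) * b$2"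
  by (simp add: braket_def sum_2)

lemma braket_cnj: "braket a b = cnj (braket b a)"
  by (simp add: braket_def mult.commute)

lemma braket_scale_right: "braket w (c *s s) = c * braket w s"
  by (simp add: braket_def sum_distrib_left mult_ac)

lemma braket_sum_right: "braket w (\<Sum>j<n. c j *s \<phi> j) = (\<Sum>j<n. c j * braket w (\<phi> j))"
  by (simp add: braket_def sum_distrib_left mult_ac) (rule sum.swap)

lemma outer_eq_mat2:
  "outer a b = mat2 (a$1 * cnj (b$1)) (a$1 * cnj (b$2)) (a$2 * cnj (b$1)) (a$2 * cnj (b$2))"
  by (simp add: outer_def mat2_def vec_eq_iff forall_2)

lemma mat2_mult:
  "mat2 a b c d ** mat2 a' b' c' d' = mat2 (a*a'+b*c') (a*b'+b*d') (c*a'+d*c') (c*b'+d*d')"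
  by (simp add: mat2_def vec_eq_iff forall_2 matrix_matrix_mult_def sum_2)

lemma trace_mat2: "trace (mat2 a b c d) = a + d"
  by (simp add: mat2_def trace_def sum_2)

definition bloch_n :: "qvec \<Rightarrow> real" where "bloch_n w = expect (outer w w) PauliI"
definition bloch_x :: "qvec \<Rightarrow> real" where "bloch_x w = expect (outer w w) PauliX"
definition bloch_y :: "qvec \<Rightarrow> real" where "bloch_y w = expect (outer w w) PauliY"
definition bloch_z :: "qvec \<Rightarrow> real" where "bloch_z w = expect (outer w w) PauliZ"

lemma bloch_eq_components:
  "bloch_n w = (cmod (w$1))\<^sup>2 + (cmod (w$2))\<^sup>2"
  "bloch_x w = 2 * Re (w$1 * cnj (w$2))"
  "bloch_y w = 2 * Im (cnj (w$1) * w$2)"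
  "bloch_z w = (cmod (w$1))\<^sup>2 - (cmod (w$2))\<^sup>2"
  by (simp_all add: bloch_n_def bloch_x_def bloch_y_def bloch_z_def expect_def outer_eq_mat2
      PauliI_def PauliX_def PauliY_def PauliZ_def mat2_mult trace_mat2 cmod_power2;
      simp add: power2_eq_square)+

lemma bloch_sphere: "(bloch_x w)\<^sup>2 + (bloch_y w)\<^sup>2 + (bloch_z w)\<^sup>2 = (bloch_n w)\<^sup>2"
  by (simp add: bloch_eq_components cmod_power2) (simp add: power2_eq_square algebra_simps)

lemma bloch_n_eq_norm: "bloch_n w = (norm w)\<^sup>2"
  by (simp add: bloch_eq_components norm_vec_def L2_set_def sum_2)

lemma overlap_bloch: "2 * (cmod (braket a b))\<^sup>2 =
   bloch_n a * bloch_n b + bloch_x a * bloch_x b + bloch_y a * bloch_y b + bloch_z a * bloch_z b"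
  by (simp add: braket_eq bloch_eq_components cmod_power2) (simp add: power2_eq_square algebra_simps)

lemma outer_eq_pauli: "outer w w = (1/2) *\<^sub>R
  (bloch_n w *\<^sub>R PauliI + bloch_x w *\<^sub>R PauliX + bloch_y w *\<^sub>R PauliY + bloch_z w *\<^sub>R PauliZ)"
  by (simp add: outer_eq_mat2 PauliI_def PauliX_def PauliY_def PauliZ_def mat2_def vec_eq_iff
      forall_2 bloch_eq_components complex_eq_iff cmod_power2) (simp add: power2_eq_square algebra_simps)

lemma bloch_coords_surj:
  fixes n x y z :: real
  assumes "0 \<le> n" and sphere: "x\<^sup>2 + y\<^sup>2 + z\<^sup>2 = n\<^sup>2"
  obtains w where "bloch_n w = n" "bloch_x w = x" "bloch_y w = y" "bloch_z w = z"
proof (cases "n + z = 0")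
  case True
  then have "z = - n" by simp
  then have "x\<^sup>2 + y\<^sup>2 = 0" using sphere by simp
  then have "x = 0" "y = 0" by (simp_all add: sum_power2_eq_zero_iff)
  then show ?thesis
    using that[of "ket 0 (sqrt n)"] \<open>z = - n\<close> \<open>0 \<le> n\<close> by (simp add: bloch_eq_components)
next
  case False
  have "z\<^sup>2 \<le> n\<^sup>2" using sphere by (smt (verit) zero_le_power2)
  then have "\<bar>z\<bar> \<le> n" using abs_le_square_iff[of z n] \<open>0 \<le> n\<close> by simp
  then have "n + z > 0" using False by linarith
  define u where "u = sqrt ((n + z) / 2)"
  have u: "u > 0" "u\<^sup>2 = (n + z) / 2" using \<open>n + z > 0\<close> by (simp_all add: u_def)
  define w where "w = ket u (Complex x y / (2 * u))"
  have "x\<^sup>2 + y\<^sup>2 = (n + z) * (n - z)"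
    using sphere by (simp add: power2_eq_square algebra_simps)
  then have "(cmod (w$2))\<^sup>2 = (n + z) * (n - z) / (4 * u\<^sup>2)"
    by (simp add: w_def cmod_power2 power_divide add_divide_distrib[symmetric])
  also have "\<dots> = (n - z) / 2"
    unfolding u(2) using \<open>n + z > 0\<close> by (simp add: field_simps)
  finally have "(cmod (w$2))\<^sup>2 = (n - z) / 2" .
  moreover have "(cmod (w$1))\<^sup>2 = (n + z) / 2" "Re (w$1 * cnj (w$2)) = x / 2"
    "Im (cnj (w$1) * w$2) = y / 2"
    using u by (simp_all add: w_def)
  ultimately show ?thesis
    using that[of w] unfolding bloch_eq_components by simp
qed

lemma stab_states_scaleI: "cmod c = 1 \<Longrightarrow> s \<in> stab_reps \<Longrightarrow> c *s s \<in> stab_states"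
  unfolding stab_states_def by blast

lemma stab_reps_subset: "stab_reps \<subseteq> stab_states"
  using stab_states_scaleI[of 1] by auto

lemma omega_witness_iff_reps: "omega_witness w \<longleftrightarrow> (\<forall>s\<in>stab_reps. cmod (braket w s) \<le> 1)"
  using stab_reps_subset
  by (auto simp: omega_witness_def stab_states_def braket_scale_right norm_mult)

lemma overlap_stab_reps:
  "2 * (cmod (braket w (ket 1 0)))\<^sup>2 = bloch_n w + bloch_z w"
  "2 * (cmod (braket w (ket 0 1)))\<^sup>2 = bloch_n w - bloch_z w"
  "2 * (cmod (braket w (ket (1 / sqrt 2) (1 / sqrt 2))))\<^sup>2 = bloch_n w + bloch_x w"
  "2 * (cmod (braket w (ket (1 / sqrt 2) (- 1 / sqrt 2))))\<^sup>2 = bloch_n w - bloch_x w"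
  "2 * (cmod (braket w (ket (1 / sqrt 2) (\<i> / sqrt 2))))\<^sup>2 = bloch_n w + bloch_y w"
  "2 * (cmod (braket w (ket (1 / sqrt 2) (- \<i> / sqrt 2))))\<^sup>2 = bloch_n w - bloch_y w"
  by (simp_all add: braket_eq bloch_eq_components cmod_power2 power_divide)
    (simp_all add: power2_eq_square field_simps)

definition bloch_witness :: "real \<Rightarrow> real \<Rightarrow> real \<Rightarrow> real \<Rightarrow> bool" where
  "bloch_witness n x y z \<longleftrightarrow>
     0 \<le> n \<and> x\<^sup>2 + y\<^sup>2 + z\<^sup>2 = n\<^sup>2 \<and> n + \<bar>x\<bar> \<le> 2 \<and> n + \<bar>y\<bar> \<le> 2 \<and> n + \<bar>z\<bar> \<le> 2"

lemma omega_witness_iff_bloch: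
  "omega_witness w \<longleftrightarrow> bloch_witness (bloch_n w) (bloch_x w) (bloch_y w) (bloch_z w)"
proof -
  have "cmod z \<le> 1 \<longleftrightarrow> 2 * (cmod z)\<^sup>2 \<le> 2" for z
    using abs_square_le_1[of "cmod z"] by simp
  then have "omega_witness w \<longleftrightarrow> (\<forall>s\<in>stab_reps. 2 * (cmod (braket w s))\<^sup>2 \<le> 2)"
    by (simp add: omega_witness_iff_reps)
  also have "\<dots> \<longleftrightarrow> bloch_witness (bloch_n w) (bloch_x w) (bloch_y w) (bloch_z w)"
    unfolding stab_reps_def ball_simps overlap_stab_reps bloch_witness_def
    by (auto simp: bloch_sphere bloch_n_eq_norm abs_le_iff)
  finally show ?thesis .
qed

lemma overlap_le_decomposition:
  assumes "omega_witness w" and "\<forall>j<n. \<phi> j \<in> stab_states" and "\<Psi> = (\<Sum>j<n. c j *s \<phi> j)"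
  shows "cmod (braket \<Psi> w) \<le> (\<Sum>j<n. cmod (c j))"
proof -
  have "cmod (braket \<Psi> w) = cmod (braket w \<Psi>)"
    by (metis complex_mod_cnj braket_cnj)
  also have "\<dots> = cmod (\<Sum>j<n. c j * braket w (\<phi> j))"
    by (simp only: assms(3) braket_sum_right)
  also have "\<dots> \<le> (\<Sum>j<n. cmod (c j) * cmod (braket w (\<phi> j)))"
    by (rule order_trans[OF norm_sum]) (simp add: norm_mult)
  also have "\<dots> \<le> (\<Sum>j<n. cmod (c j))"
    using assms(1,2) by (intro sum_mono mult_left_le) (auto simp: omega_witness_def)
  finally show ?thesis .
qed

lemma overlap_le_xi:
  assumes "omega_witness w"
  shows "(cmod (braket \<Psi> w))\<^sup>2 \<le> xi \<Psi>"
  unfolding xi_def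
proof (rule cInf_greatest)
  let ?c = "\<lambda>j::nat. \<Psi> $ (if j = 0 then 1 else 2)"
  let ?\<phi> = "\<lambda>j::nat. if j = 0 then ket 1 0 else ket 0 1"
  have "ket 1 0 \<in> stab_states" "ket 0 1 \<in> stab_states"
    using stab_reps_subset unfolding stab_reps_def by simp_all
  then have stab: "\<forall>j<2. ?\<phi> j \<in> stab_states"
    by simp
  have decomp: "\<Psi> = (\<Sum>j<2. ?c j *s ?\<phi> j)"
    by (simp add: numeral_2_eq_2 vec_eq_iff forall_2)
  have "(\<Sum>j<2. cmod (?c j))\<^sup>2 \<in> {(\<Sum>j<n. cmod (c j))\<^sup>2 | (n::nat) c \<phi>.
      (\<forall>j<n. \<phi> j \<in> stab_states) \<and> \<Psi> = (\<Sum>j<n. c j *s \<phi> j)}"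
    unfolding mem_Collect_eq
    by (intro exI[where x=2] exI[where x="?c"] exI[where x="?\<phi>"] conjI refl stab decomp)
  then show "{(\<Sum>j<n. cmod (c j))\<^sup>2 | (n::nat) c \<phi>.
      (\<forall>j<n. \<phi> j \<in> stab_states) \<and> \<Psi> = (\<Sum>j<n. c j *s \<phi> j)} \<noteq> {}"
    by blast
next
  fix x assume "x \<in> {(\<Sum>j<n. cmod (c j))\<^sup>2 | (n::nat) c \<phi>.
      (\<forall>j<n. \<phi> j \<in> stab_states) \<and> \<Psi> = (\<Sum>j<n. c j *s \<phi> j)}"
  then obtain n :: nat and c \<phi> where x: "x = (\<Sum>j<n. cmod (c j))\<^sup>2"
    and "\<forall>j<n. \<phi> j \<in> stab_states" and "\<Psi> = (\<Sum>j<n. c j *s \<phi> j)"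
    by blast
  then have "cmod (braket \<Psi> w) \<le> (\<Sum>j<n. cmod (c j))"
    by (intro overlap_le_decomposition[OF assms])
  then show "(cmod (braket \<Psi> w))\<^sup>2 \<le> x"
    unfolding x by (rule power_mono) simp
qed

lemma stab_state_if_bloch_z:
  assumes "bloch_n w = 1" and "bloch_z w = 1"
  shows "w \<in> stab_states"
proof -
  have "(cmod (w$2))\<^sup>2 = 0" "(cmod (w$1))\<^sup>2 = 1"
    using assms unfolding bloch_eq_components by linarith+
  then have "w$2 = 0" "cmod (w$1) = 1"
    by (simp_all add: abs_square_eq_1)
  have "w$1 *s ket 1 0 \<in> stab_states"
    using \<open>cmod (w$1) = 1\<close> by (rule stab_states_scaleI) (simp add: stab_reps_def)
  moreover have "w$1 *s ket 1 0 = w"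
    using \<open>w$2 = 0\<close> by (simp add: vec_eq_iff forall_2)
  ultimately show ?thesis
    by (rule back_subst)
qed

lemma stab_state_if_bloch_x:
  assumes "bloch_n w = 1" and "bloch_x w = 1"
  shows "w \<in> stab_states"
proof -
  have "(cmod (w$1 - w$2))\<^sup>2 = bloch_n w - bloch_x w"
    by (simp add: bloch_eq_components cmod_power2) (simp add: power2_eq_square algebra_simps)
  then have "w$2 = w$1" using assms by simp
  moreover have "(cmod (sqrt 2 * w$1))\<^sup>2 = 2 * (cmod (w$1))\<^sup>2"
    by (simp add: norm_mult power_mult_distrib)
  ultimately have "cmod (sqrt 2 * w$1) = 1"
    using assms(1) by (simp add: bloch_eq_components abs_square_eq_1)
  then have "(sqrt 2 * w$1) *s ket (1 / sqrt 2) (1 / sqrt 2) \<in> stab_states"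
    by (rule stab_states_scaleI) (simp add: stab_reps_def)
  moreover have "(sqrt 2 * w$1) *s ket (1 / sqrt 2) (1 / sqrt 2) = w"
    using \<open>w$2 = w$1\<close> by (simp add: vec_eq_iff forall_2)
  ultimately show ?thesis
    by (rule back_subst)
qed

lemma cauchy_schwarz3_identity:
  fixes sx sy sz wx wy wz n k :: real
  assumes "sx\<^sup>2 + sy\<^sup>2 + sz\<^sup>2 = n\<^sup>2" and "wx\<^sup>2 + wy\<^sup>2 + wz\<^sup>2 = k\<^sup>2"
  shows "(k * sx - n * wx)\<^sup>2 + (k * sy - n * wy)\<^sup>2 + (k * sz - n * wz)\<^sup>2
           = 2 * k * n * (k * n - (sx * wx + sy * wy + sz * wz))"
proof -
  have "(k * sx - n * wx)\<^sup>2 + (k * sy - n * wy)\<^sup>2 + (k * sz - n * wz)\<^sup>2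
      = k\<^sup>2 * (sx\<^sup>2 + sy\<^sup>2 + sz\<^sup>2) + n\<^sup>2 * (wx\<^sup>2 + wy\<^sup>2 + wz\<^sup>2)
        - 2 * k * n * (sx * wx + sy * wy + sz * wz)"
    by (simp add: power2_eq_square algebra_simps)
  then show ?thesis
    unfolding assms by (simp add: power2_eq_square algebra_simps)
qed

lemma cauchy_schwarz3:
  fixes sx sy sz wx wy wz n k :: real
  assumes "sx\<^sup>2 + sy\<^sup>2 + sz\<^sup>2 = n\<^sup>2" and "wx\<^sup>2 + wy\<^sup>2 + wz\<^sup>2 = k\<^sup>2" and "0 \<le> n" and "0 < k"
  shows "sx * wx + sy * wy + sz * wz \<le> n * k"
proof (cases "n = 0")
  case True
  then have "sx = 0" "sy = 0" "sz = 0"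
    using assms(1) by (smt (verit) zero_eq_power2 zero_le_power2)+
  then show ?thesis
    using True by simp
next
  case False
  have "0 \<le> (2 * k * n) * (k * n - (sx * wx + sy * wy + sz * wz))"
    unfolding cauchy_schwarz3_identity[OF assms(1,2), symmetric] by simp
  moreover have "0 < 2 * k * n"
    using False assms(3,4) by simp
  ultimately show ?thesis
    by (simp add: zero_le_mult_iff mult.commute)
qed

lemma cauchy_schwarz3_eq:
  fixes sx sy sz wx wy wz n k :: real
  assumes "sx\<^sup>2 + sy\<^sup>2 + sz\<^sup>2 = n\<^sup>2" and "wx\<^sup>2 + wy\<^sup>2 + wz\<^sup>2 = k\<^sup>2"
    and "sx * wx + sy * wy + sz * wz = n * k"
  shows "k * sx = n * wx" "k * sy = n * wy" "k * sz = n * wz"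
proof -
  have "(k * sx - n * wx)\<^sup>2 + (k * sy - n * wy)\<^sup>2 + (k * sz - n * wz)\<^sup>2 = 0"
    using cauchy_schwarz3_identity[OF assms(1,2)] assms(3) by (simp add: mult.commute)
  then show "k * sx = n * wx" "k * sy = n * wy" "k * sz = n * wz"
    by (simp_all add: sum_power2_eq_zero_iff add_nonneg_eq_0_iff)
qed

lemma nonneg_unit_sum_le_one:
  fixes x y z :: real
  assumes "0 \<le> x" "0 \<le> y" "0 \<le> z" "x\<^sup>2 + y\<^sup>2 + z\<^sup>2 = 1" "x + y + z \<le> 1"
  shows "(x = 1 \<and> y = 0 \<and> z = 0) \<or> (x = 0 \<and> y = 1 \<and> z = 0) \<or> (x = 0 \<and> y = 0 \<and> z = 1)"
proof -
  have "(x + y + z)\<^sup>2 \<le> 1"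
    using assms by (simp add: power_le_one)
  moreover have "(x + y + z)\<^sup>2 = 1 + 2 * (x * y + y * z + x * z)"
    using assms(4) by (simp add: power2_eq_square algebra_simps)
  ultimately have "x * y = 0" "y * z = 0" "x * z = 0"
    using assms(1-3) by (smt (verit) mult_nonneg_nonneg)+
  then show ?thesis
    using assms(1-4) by (auto simp: power2_eq_1_iff)
qed

lemma bloch_witness_symmetric: "bloch_witness (3 - sqrt 3) (sqrt 3 - 1) (sqrt 3 - 1) (sqrt 3 - 1)"
proof -
  have "sqrt 3 \<ge> 1" "sqrt 3 \<le> 3"
    by (simp_all add: real_le_rsqrt real_sqrt_le_iff[of 3 9, simplified])
  moreover have "3 * (sqrt 3 - 1)\<^sup>2 = (3 - sqrt 3)\<^sup>2"
    by (simp add: power2_eq_square algebra_simps)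
  ultimately show ?thesis
    by (simp add: bloch_witness_def)
qed

(* k is the multiplier of the Cauchy-Schwarz constraint sx + sy + sz \<le> sqrt 3 n and the faces
   n + s_i \<le> 2 carry the multipliers p_i - k; when py is the smallest coordinate, all are
   nonnegative exactly when k \<le> py. *)
lemma symmetric_regime_certificate:
  fixes px py pz n sx sy sz k :: real
  assumes "k * (3 + sqrt 3) = px + py + pz - 1"
  shows "n + sx * px + sy * py + sz * pz - ((3 - sqrt 3) + (sqrt 3 - 1) * (px + py + pz))
    = (px - k) * (n + sx - 2) + (py - k) * (n + sy - 2) + (pz - k) * (n + sz - 2)
      + k * (sx + sy + sz - n * sqrt 3)"
proof -
  have "(3 - sqrt 3) * (3 + sqrt 3) = 6"
    by (simp add: algebra_simps)
  then have "6 * k = (3 - sqrt 3) * (px + py + pz - 1)"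
    by (metis assms mult.assoc mult.commute)
  moreover have "n * k * (3 + sqrt 3) = n * (px + py + pz - 1)"
    by (simp add: assms mult.assoc)
  ultimately show ?thesis
    by (simp add: algebra_simps)
qed

lemma symmetric_regime_optimum:
  fixes px py pz n sx sy sz :: real
  assumes p: "py \<le> px" "py \<le> pz" "1 < px + py + pz" "px + py + pz - 1 \<le> (3 + sqrt 3) * py"
    and s: "bloch_witness n sx sy sz"
    and val: "(3 - sqrt 3) + (sqrt 3 - 1) * (px + py + pz) \<le> n + sx * px + sy * py + sz * pz"
  shows "sy = sx \<and> sz = sx \<and> n + sx = 2"
proof -
  define k where "k = (px + py + pz - 1) / (3 + sqrt 3)"
  have pos: "0 < 3 + sqrt 3"
    by (simp add: add_pos_nonneg)
  then have k_eq: "k * (3 + sqrt 3) = px + py + pz - 1"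
    by (simp add: k_def)
  have "0 < k" "k \<le> py"
    using p(3,4) pos by (simp_all add: k_def pos_divide_le_eq mult.commute)
  then have k: "0 < k" "k \<le> px" "k \<le> py" "k \<le> pz"
    using p(1,2) by linarith+
  have sphere: "sx\<^sup>2 + sy\<^sup>2 + sz\<^sup>2 = n\<^sup>2" "0 \<le> n"
    and face: "n + sx \<le> 2" "n + sy \<le> 2" "n + sz \<le> 2"
    using s by (auto simp: bloch_witness_def)
  have "sx + sy + sz \<le> n * sqrt 3"
    using cauchy_schwarz3[OF sphere(1), of 1 1 1 "sqrt 3"] sphere(2) by simp
  then have "(px - k) * (n + sx - 2) \<le> 0" "(py - k) * (n + sy - 2) \<le> 0"
    "(pz - k) * (n + sz - 2) \<le> 0" "k * (sx + sy + sz - n * sqrt 3) \<le> 0"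
    using k face by (simp_all add: mult_nonneg_nonpos)
  then have tight: "(px - k) * (n + sx - 2) = 0" "(py - k) * (n + sy - 2) = 0"
    "(pz - k) * (n + sz - 2) = 0" "k * (sx + sy + sz - n * sqrt 3) = 0"
    using val symmetric_regime_certificate[OF k_eq, of n sx sy sz] by linarith+
  then have "sx + sy + sz = n * sqrt 3"
    using k(1) by simp
  then have "sqrt 3 * sx = n" "sqrt 3 * sy = n" "sqrt 3 * sz = n"
    using cauchy_schwarz3_eq[OF sphere(1), of 1 1 1 "sqrt 3"] by simp_all
  then have eq: "sy = sx" "sz = sx"
    by (metis mult_cancel_left real_sqrt_eq_zero_cancel_iff zero_neq_numeral)+
  moreover have "n + sx = 2"
  proof (rule ccontr)
    assume "n + sx \<noteq> 2"
    then have "px + py + pz = 3 * k"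
      using tight(1-3) eq by simp
    then have "k * sqrt 3 = - 1"
      using k_eq by (simp add: algebra_simps)
    moreover have "0 < k * sqrt 3"
      using k(1) by simp
    ultimately show False
      by simp
  qed
  ultimately show ?thesis
    by simp
qed

(* H = (X + Z) / sqrt 2.  In the second regime D = <X> + <Z> - 1 and py = <Y>, and the vector
   (wx, py, wx) is the Cauchy-Schwarz direction of the certificate: the optimal witness turns
   out to be parallel to it. *)
lemma HY_plane_direction:
  fixes D py :: real
  defines "R \<equiv> sqrt (D\<^sup>2 + py\<^sup>2)"
  defines "wx \<equiv> D - sqrt 2 * R / 2"
  assumes "0 < D" and "R \<le> sqrt 2 * (D - py)"
  shows "0 < sqrt 2 * R - D" and "wx\<^sup>2 + py\<^sup>2 + wx\<^sup>2 = (sqrt 2 * R - D)\<^sup>2" and "py \<le> wx"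
proof -
  have R: "R\<^sup>2 = D\<^sup>2 + py\<^sup>2" "D \<le> R"
    by (simp_all add: R_def real_le_rsqrt)
  then have "R < sqrt 2 * R"
    using assms(3) by simp
  then show "0 < sqrt 2 * R - D"
    using R(2) by simp
  show "wx\<^sup>2 + py\<^sup>2 + wx\<^sup>2 = (sqrt 2 * R - D)\<^sup>2"
    using R(1) by (simp add: wx_def power2_eq_square algebra_simps)
  have "sqrt 2 * (wx - py) = sqrt 2 * (D - py) - R"
    by (simp add: wx_def algebra_simps)
  then have "0 \<le> sqrt 2 * (wx - py)"
    using assms(4) by simp
  then show "py \<le> wx"
    by (simp add: zero_le_mult_iff)
qed

lemma HY_plane_regime_optimum:
  fixes px py pz n sx sy sz :: real
  defines "D \<equiv> px + pz - 1"
  defines "R \<equiv> sqrt (D\<^sup>2 + py\<^sup>2)"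
  assumes p: "0 < D" "0 \<le> py" "px \<le> 1" "pz \<le> 1" "R \<le> sqrt 2 * (D - py)"
    and s: "bloch_witness n sx sy sz"
    and val: "2 * (1 - D + sqrt 2 * R) \<le> n + sx * px + sy * py + sz * pz"
  shows "n + sx = 2 \<and> sz = sx \<and> 0 \<le> sy \<and> sy \<le> sx"
proof -
  define k where "k = sqrt 2 * R - D"
  define wx where "wx = D - sqrt 2 * R / 2"
  have k: "0 < k" and w: "wx\<^sup>2 + py\<^sup>2 + wx\<^sup>2 = k\<^sup>2" and "py \<le> wx"
    using HY_plane_direction[OF p(1)] p(5) unfolding k_def wx_def R_def by simp_all
  have sphere: "sx\<^sup>2 + sy\<^sup>2 + sz\<^sup>2 = n\<^sup>2" "0 \<le> n"
    and face: "n + sx \<le> 2" "n + sz \<le> 2"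
    using s by (auto simp: bloch_witness_def)
  define mx where "mx = 1 - pz + sqrt 2 * R / 2"
  define mz where "mz = 1 - px + sqrt 2 * R / 2"
  have "0 < sqrt 2 * R"
    using k p(1) by (simp add: k_def)
  then have "0 < mx" "0 < mz"
    using p(3,4) by (simp_all add: mx_def mz_def)
  then have "mx * (n + sx - 2) \<le> 0" "mz * (n + sz - 2) \<le> 0"
    using face by (simp_all add: mult_nonneg_nonpos)
  moreover have "n + sx * px + sy * py + sz * pz - 2 * (1 - D + sqrt 2 * R)
      = mx * (n + sx - 2) + mz * (n + sz - 2) + (sx * wx + sy * py + sz * wx - n * k)"
    by (simp add: mx_def mz_def wx_def k_def D_def field_simps)
  ultimately have "mx * (n + sx - 2) = 0" "mz * (n + sz - 2) = 0"
    and tight: "sx * wx + sy * py + sz * wx = n * k"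
    using val cauchy_schwarz3[OF sphere(1) w sphere(2) k] by linarith+
  then have "n + sx = 2" "n + sz = 2"
    using \<open>0 < mx\<close> \<open>0 < mz\<close> by simp_all
  moreover have "k * sx = n * wx" "k * sy = n * py"
    using cauchy_schwarz3_eq[OF sphere(1) w tight] by simp_all
  then have "0 \<le> k * sy" "0 \<le> k * (sx - sy)"
    using \<open>py \<le> wx\<close> sphere(2) p(2) by (simp_all add: right_diff_distrib mult_left_mono)
  ultimately show ?thesis
    using k by (simp add: zero_le_mult_iff)
qed

(* The reference witness of the second regime; its Bloch vector (c - 1, d, c - 1) is parallel
   to the direction (wx, py, wx) of HY_plane_direction. *)
lemma bloch_witness_HY_plane:
  fixes D py :: real
  defines "R \<equiv> sqrt (D\<^sup>2 + py\<^sup>2)"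
  defines "c \<equiv> sqrt 2 * D / R" and "d \<equiv> sqrt 2 * py / R"
  assumes "0 < D" "0 \<le> py" "R \<le> sqrt 2 * (D - py)"
  shows "bloch_witness (4 - 2 * c) (2 * c - 2) (2 * d) (2 * c - 2)"
proof -
  have "D \<le> R" "0 < R"
    using assms(4) by (simp_all add: R_def real_le_rsqrt add_pos_nonneg)
  have "c\<^sup>2 + d\<^sup>2 = (sqrt 2 / R)\<^sup>2 * (D\<^sup>2 + py\<^sup>2)"
    by (simp add: c_def d_def power_mult_distrib power_divide distrib_left)
  also have "\<dots> = (sqrt 2 / R)\<^sup>2 * R\<^sup>2"
    by (simp add: R_def)
  also have "\<dots> = 2"
    using \<open>0 < R\<close> by (simp add: power_divide)
  finally have "(2 * c - 2)\<^sup>2 + (2 * d)\<^sup>2 + (2 * c - 2)\<^sup>2 = (4 - 2 * c)\<^sup>2"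
    by (simp add: power2_eq_square algebra_simps)
  moreover have "c \<le> sqrt 2" "0 \<le> d" "1 \<le> c - d"
    using assms(5,6) \<open>D \<le> R\<close> \<open>0 < R\<close> by (simp_all add: c_def d_def field_simps)
  moreover have "sqrt 2 \<le> 2"
    by (simp add: real_sqrt_le_iff[of 2 4, simplified])
  ultimately show ?thesis
    by (simp add: bloch_witness_def)
qed

(* At (2 + sqrt 3) <Y> = D the two regimes meet: there the reference witness of the H-Y plane
   has x = y = z. *)
lemma HY_plane_regime_threshold:
  fixes D py :: real
  assumes "0 \<le> py" and "(2 + sqrt 3) * py \<le> D"
  shows "sqrt (D\<^sup>2 + py\<^sup>2) \<le> sqrt 2 * (D - py)"
proof (rule real_le_lsqrt)
  have "sqrt 3 * py \<le> D - 2 * py" "0 \<le> sqrt 3 * py"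
    using assms by (simp_all add: algebra_simps)
  then have "0 \<le> D - py"
    using assms(1) by linarith
  then show "0 \<le> sqrt 2 * (D - py)"
    by simp
  have "(sqrt 3 * py)\<^sup>2 \<le> (D - 2 * py)\<^sup>2"
    using \<open>sqrt 3 * py \<le> D - 2 * py\<close> \<open>0 \<le> sqrt 3 * py\<close> by (rule power_mono)
  then show "D\<^sup>2 + py\<^sup>2 \<le> (sqrt 2 * (D - py))\<^sup>2"
    by (simp add: power_mult_distrib power2_eq_square algebra_simps)
qed

lemma HY_plane_regime_maximum:
  fixes px py pz n sx sy sz :: real
  assumes p: "0 \<le> py" "px \<le> 1" "pz \<le> 1" "(2 + sqrt 3) * py < px + pz - 1"
    and s: "bloch_witness n sx sy sz"
    and max: "\<And>m tx ty tz. bloch_witness m tx ty tz \<Longrightarrow>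
                m + tx * px + ty * py + tz * pz \<le> n + sx * px + sy * py + sz * pz"
  shows "n + sx = 2 \<and> sz = sx \<and> 0 \<le> sy \<and> sy \<le> sx"
proof -
  define D where "D = px + pz - 1"
  define R where "R = sqrt (D\<^sup>2 + py\<^sup>2)"
  define c where "c = sqrt 2 * D / R"
  define d where "d = sqrt 2 * py / R"
  have "0 \<le> (2 + sqrt 3) * py"
    using p(1) by simp
  then have "0 < D"
    using p(4) unfolding D_def by linarith
  then have "0 < R" and regime: "R \<le> sqrt 2 * (D - py)"
    using p(1,4) unfolding R_def D_def by (simp_all add: add_pos_nonneg HY_plane_regime_threshold)
  have "c * D + d * py = sqrt 2 * (D\<^sup>2 + py\<^sup>2) / R"
    by (simp add: c_def d_def power2_eq_square add_divide_distrib algebra_simps)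
  also have "\<dots> = sqrt 2 * R\<^sup>2 / R"
    by (simp add: R_def)
  also have "\<dots> = sqrt 2 * R"
    using \<open>0 < R\<close> by (simp add: power2_eq_square)
  finally have ref_value: "(4 - 2 * c) + (2 * c - 2) * px + (2 * d) * py + (2 * c - 2) * pz
      = 2 * (1 - D + sqrt 2 * R)"
    by (simp add: D_def algebra_simps)
  have "bloch_witness (4 - 2 * c) (2 * c - 2) (2 * d) (2 * c - 2)"
    using bloch_witness_HY_plane[OF \<open>0 < D\<close> p(1)] regime unfolding c_def d_def R_def by simp
  then have "2 * (1 - D + sqrt 2 * R) \<le> n + sx * px + sy * py + sz * pz"
    using max unfolding ref_value[symmetric] by blast
  then show ?thesis
    using HY_plane_regime_optimum[OF _ p(1-3) _ s] \<open>0 < D\<close> regime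
    unfolding D_def R_def by blast
qed

lemma optimal_bloch_witness:
  fixes px py pz n sx sy sz :: real
  assumes p: "0 \<le> py" "py \<le> px" "py \<le> pz" "px\<^sup>2 + py\<^sup>2 + pz\<^sup>2 = 1" "1 < px + py + pz"
    and s: "bloch_witness n sx sy sz"
    and max: "\<And>m tx ty tz. bloch_witness m tx ty tz \<Longrightarrow>
                m + tx * px + ty * py + tz * pz \<le> n + sx * px + sy * py + sz * pz"
  shows "n + sx = 2 \<and> sz = sx \<and> 0 \<le> sy \<and> sy \<le> sx \<and> (py = px \<or> py = pz \<longrightarrow> sy = sx)"
proof (cases "px + pz - 1 \<le> (2 + sqrt 3) * py")
  case True
  then have "sy = sx \<and> sz = sx \<and> n + sx = 2"
    using symmetric_regime_optimum[OF p(2,3,5) _ s] max[OF bloch_witness_symmetric]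
    by (simp add: algebra_simps)
  moreover have "n + \<bar>sx\<bar> \<le> 2"
    using s by (simp add: bloch_witness_def)
  ultimately show ?thesis
    by auto
next
  case False
  have "px\<^sup>2 \<le> 1" "pz\<^sup>2 \<le> 1"
    using p(4) zero_le_power2[of px] zero_le_power2[of py] zero_le_power2[of pz] by linarith+
  then have "px \<le> 1" "pz \<le> 1"
    by (simp_all add: abs_square_le_1 abs_le_iff)
  moreover have "py \<le> (2 + sqrt 3) * py"
    using p(1) by (simp add: algebra_simps)
  ultimately have "py \<noteq> px" "py \<noteq> pz"
    using False by auto
  with HY_plane_regime_maximum[OF p(1) \<open>px \<le> 1\<close> \<open>pz \<le> 1\<close> _ s max] False show ?thesis
    by simp
qed

lemma in_PY_bloch:
  "in_PY (outer w w) \<longleftrightarrow> 0 \<le> bloch_y w \<and> bloch_y w \<le> bloch_x w \<and> bloch_y w \<le> bloch_z w"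
  by (auto simp: in_PY_def in_P_def bloch_x_def bloch_y_def bloch_z_def)

lemma in_PX_or_PZ_bloch_tie:
  assumes "in_PY (outer w w)" and "in_PX (outer w w) \<or> in_PZ (outer w w)"
  shows "bloch_y w = bloch_x w \<or> bloch_y w = bloch_z w"
  using assms by (auto simp: in_PX_def in_PY_def in_PZ_def bloch_x_def bloch_y_def bloch_z_def)

lemma bloch_sum_gt_one_if_nonstab:
  assumes "norm \<Psi> = 1" and "\<Psi> \<notin> stab_states" and "in_PY (outer \<Psi> \<Psi>)"
  shows "1 < bloch_x \<Psi> + bloch_y \<Psi> + bloch_z \<Psi>"
proof (rule ccontr)
  assume "\<not> ?thesis"
  moreover have n: "bloch_n \<Psi> = 1"
    using assms(1) by (simp add: bloch_n_eq_norm)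
  moreover have "(bloch_x \<Psi>)\<^sup>2 + (bloch_y \<Psi>)\<^sup>2 + (bloch_z \<Psi>)\<^sup>2 = 1"
    using bloch_sphere[of \<Psi>] n by simp
  moreover have "0 \<le> bloch_y \<Psi>" "bloch_y \<Psi> \<le> bloch_x \<Psi>" "bloch_y \<Psi> \<le> bloch_z \<Psi>"
    using assms(3) by (simp_all add: in_PY_bloch)
  ultimately have "bloch_x \<Psi> = 1 \<or> bloch_z \<Psi> = 1"
    using nonneg_unit_sum_le_one[of "bloch_x \<Psi>" "bloch_y \<Psi>" "bloch_z \<Psi>"] by auto
  then have "\<Psi> \<in> stab_states"
    using n stab_state_if_bloch_x stab_state_if_bloch_z by blast
  with assms(2) show False ..
qed

lemma optimal_witness_maximizes_bloch_overlap:
  assumes "norm \<Psi> = 1" and "(cmod (braket \<Psi> \<omega>))\<^sup>2 = xi \<Psi>" and "bloch_witness m tx ty tz"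
  shows "m + tx * bloch_x \<Psi> + ty * bloch_y \<Psi> + tz * bloch_z \<Psi>
    \<le> bloch_n \<omega> + bloch_x \<omega> * bloch_x \<Psi> + bloch_y \<omega> * bloch_y \<Psi> + bloch_z \<omega> * bloch_z \<Psi>"
proof -
  obtain w where w: "bloch_n w = m" "bloch_x w = tx" "bloch_y w = ty" "bloch_z w = tz"
    using bloch_coords_surj assms(3) unfolding bloch_witness_def by metis
  then have "omega_witness w"
    using assms(3) by (simp add: omega_witness_iff_bloch)
  then have "2 * (cmod (braket \<Psi> w))\<^sup>2 \<le> 2 * (cmod (braket \<Psi> \<omega>))\<^sup>2"
    using overlap_le_xi assms(2) by simp
  moreover have "bloch_n \<Psi> = 1"
    using assms(1) by (simp add: bloch_n_eq_norm)
  ultimately show ?thesis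
    unfolding overlap_bloch w by (simp add: mult.commute)
qed

lemma outer_eq_on_face:
  assumes "bloch_n w + bloch_x w = 2" and "bloch_z w = bloch_x w"
  shows "0 < bloch_n w"
    and "2 * (bloch_x w / bloch_n w)\<^sup>2 + (bloch_y w / bloch_n w)\<^sup>2 = 1"
    and "outer w w = (1 / (1 + bloch_x w / bloch_n w)) *\<^sub>R
      (PauliI + (bloch_x w / bloch_n w) *\<^sub>R (PauliX + PauliZ) + (bloch_y w / bloch_n w) *\<^sub>R PauliY)"
proof -
  have sphere: "2 * (bloch_x w)\<^sup>2 + (bloch_y w)\<^sup>2 = (bloch_n w)\<^sup>2"
    using bloch_sphere[of w] assms(2) by simp
  show "0 < bloch_n w"
  proof (rule ccontr)
    assume "\<not> 0 < bloch_n w"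
    then have "bloch_n w = 0"
      using bloch_n_eq_norm[of w] by simp
    then show False
      using sphere assms(1) by (smt (verit) zero_le_power2 zero_eq_power2)
  qed
  then show "2 * (bloch_x w / bloch_n w)\<^sup>2 + (bloch_y w / bloch_n w)\<^sup>2 = 1"
    using sphere by (simp add: power_divide field_simps)
  have scale: "1 / (1 + bloch_x w / bloch_n w) = bloch_n w / 2"
    using \<open>0 < bloch_n w\<close> assms(1) by (simp add: field_simps)
  show "outer w w = (1 / (1 + bloch_x w / bloch_n w)) *\<^sub>R
      (PauliI + (bloch_x w / bloch_n w) *\<^sub>R (PauliX + PauliZ) + (bloch_y w / bloch_n w) *\<^sub>R PauliY)"
    unfolding scale outer_eq_pauli using \<open>0 < bloch_n w\<close> assms(2)
    by (simp add: scaleR_add_right algebra_simps)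
qed

lemma witness_form_on_face:
  assumes "bloch_n w + bloch_x w = 2" and "bloch_z w = bloch_x w"
    and "0 \<le> bloch_y w" and "bloch_y w \<le> bloch_x w"
  shows "\<exists>q::real. sqrt (2/3) \<le> q \<and> q \<le> 1 \<and>
    outer w w = (1 / (1 + q / sqrt 2)) *\<^sub>R
      (PauliI + (q / sqrt 2) *\<^sub>R (PauliX + PauliZ) + sqrt (1 - q\<^sup>2) *\<^sub>R PauliY)"
proof -
  define m where "m = bloch_x w / bloch_n w"
  define t where "t = bloch_y w / bloch_n w"
  have n: "0 < bloch_n w" and mt: "2 * m\<^sup>2 + t\<^sup>2 = 1"
    using outer_eq_on_face(1,2)[OF assms(1,2)] by (simp_all add: m_def t_def)
  have "0 \<le> t" "t \<le> m"
    using n assms(3,4) by (simp_all add: m_def t_def divide_right_mono)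
  define q where "q = sqrt 2 * m"
  have q2: "q\<^sup>2 = 2 * m\<^sup>2" and "0 \<le> q"
    using \<open>0 \<le> t\<close> \<open>t \<le> m\<close> by (simp_all add: q_def power_mult_distrib)
  have "t\<^sup>2 \<le> m\<^sup>2"
    using \<open>t \<le> m\<close> \<open>0 \<le> t\<close> by (rule power_mono)
  then have "sqrt (2/3) \<le> sqrt (q\<^sup>2)" and "q\<^sup>2 \<le> 1"
    using mt q2 by (simp_all add: real_sqrt_le_iff) (smt (verit) zero_le_power2)
  moreover have "sqrt (1 - q\<^sup>2) = t"
    using q2 mt \<open>0 \<le> t\<close> by (intro real_sqrt_unique) simp_all
  moreover have "q / sqrt 2 = m"
    by (simp add: q_def)
  ultimately show ?thesis
    using outer_eq_on_face(3)[OF assms(1,2)] \<open>0 \<le> q\<close> unfolding m_def t_def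
    by (intro exI[where x=q]) (simp add: abs_square_le_1)
qed

lemma witness_form_symmetric:
  assumes "bloch_n w + bloch_x w = 2" and "bloch_z w = bloch_x w"
    and "0 \<le> bloch_y w" and "bloch_y w = bloch_x w"
  shows "outer w w = (1 / (1 + 1 / sqrt 3)) *\<^sub>R
    (PauliI + (1 / sqrt 3) *\<^sub>R (PauliX + PauliY + PauliZ))"
proof -
  define m where "m = bloch_x w / bloch_n w"
  have "0 < bloch_n w" and "3 * m\<^sup>2 = 1"
    using outer_eq_on_face(1,2)[OF assms(1,2)] assms(4) by (simp_all add: m_def)
  moreover have "0 \<le> m"
    using \<open>0 < bloch_n w\<close> assms(3,4) by (simp add: m_def)
  ultimately have "sqrt (1 / 3) = m"
    by (intro real_sqrt_unique) simp_all
  then have "m = 1 / sqrt 3"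
    by (simp add: real_sqrt_divide)
  moreover have "outer w w = (1 / (1 + m)) *\<^sub>R (PauliI + m *\<^sub>R (PauliX + PauliZ) + m *\<^sub>R PauliY)"
    using outer_eq_on_face(3)[OF assms(1,2)] assms(4) by (simp add: m_def)
  ultimately show ?thesis
    by (simp add: scaleR_add_right algebra_simps)
qed

theorem lemma3:
  fixes \<Psi> \<omega> :: qvec
  assumes pure: "norm \<Psi> = 1"
    and nonstab: "\<Psi> \<notin> stab_states"
    and PY: "in_PY (outer \<Psi> \<Psi>)"
    and wit: "omega_witness \<omega>"
    and opt: "(cmod (braket \<Psi> \<omega>))\<^sup>2 = xi \<Psi>"
  shows "(\<exists>q::real. sqrt (2/3) \<le> q \<and> q \<le> 1 \<and>
           outer \<omega> \<omega> = (1 / (1 + q / sqrt 2)) *\<^sub>R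
             (PauliI + (q / sqrt 2) *\<^sub>R (PauliX + PauliZ) + sqrt (1 - q\<^sup>2) *\<^sub>R PauliY))
       \<and> ((in_PX (outer \<Psi> \<Psi>) \<or> in_PZ (outer \<Psi> \<Psi>)) \<longrightarrow>
           outer \<omega> \<omega> = (1 / (1 + 1 / sqrt 3)) *\<^sub>R
             (PauliI + (1 / sqrt 3) *\<^sub>R (PauliX + PauliY + PauliZ)))"
proof -
  have "(bloch_x \<Psi>)\<^sup>2 + (bloch_y \<Psi>)\<^sup>2 + (bloch_z \<Psi>)\<^sup>2 = 1"
    using bloch_sphere[of \<Psi>] pure by (simp add: bloch_n_eq_norm)
  moreover have "1 < bloch_x \<Psi> + bloch_y \<Psi> + bloch_z \<Psi>"
    using pure nonstab PY by (rule bloch_sum_gt_one_if_nonstab)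
  moreover have "bloch_witness (bloch_n \<omega>) (bloch_x \<omega>) (bloch_y \<omega>) (bloch_z \<omega>)"
    using wit by (simp add: omega_witness_iff_bloch)
  ultimately have "bloch_n \<omega> + bloch_x \<omega> = 2 \<and> bloch_z \<omega> = bloch_x \<omega> \<and>
      0 \<le> bloch_y \<omega> \<and> bloch_y \<omega> \<le> bloch_x \<omega> \<and>
      (bloch_y \<Psi> = bloch_x \<Psi> \<or> bloch_y \<Psi> = bloch_z \<Psi> \<longrightarrow> bloch_y \<omega> = bloch_x \<omega>)"
    using PY optimal_witness_maximizes_bloch_overlap[OF pure opt]
    by (intro optimal_bloch_witness) (simp_all add: in_PY_bloch)
  then have face: "bloch_n \<omega> + bloch_x \<omega> = 2" "bloch_z \<omega> = bloch_x \<omega>"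
    and y: "0 \<le> bloch_y \<omega>" "bloch_y \<omega> \<le> bloch_x \<omega>"
    and tie: "(in_PX (outer \<Psi> \<Psi>) \<or> in_PZ (outer \<Psi> \<Psi>)) \<longrightarrow> bloch_y \<omega> = bloch_x \<omega>"
    using in_PX_or_PZ_bloch_tie[OF PY] by blast+
  show ?thesis
    using witness_form_on_face[OF face y] witness_form_symmetric[OF face y(1)] tie by blast
qed

end
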